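(* Define integer matrices $(a(i,j))_{i,j\ge1}$ and $(b(i,j))_{i,j\ge1}$ as follows. The first three rows are (entries listed for $j=1,2,\dots$; all further entries in these rows are $0$): \begin{itemize} \item $a(1,\cdot)=(10,-36,27)$; $a(2,\cdot)=(-8,306,-2160,5508,-5832,2187)$; $a(3,\cdot)=(1,-360,10566,-99144,423549,-944784,1141614,-708588,177147)$; \item $b(1,\cdot)=(-9,252,-891,729)$; $b(2,\cdot)=(1,-378,8613,-54675,138510,-150903,59049)$; $b(3,\cdot)=(0,147,-14553,312255,-2617839,10764414,-23914845,29288304,-18600435,4782969)$. \end{itemize} For $i\ge4$ and $j\ge1$, both $m=a$ and $m=b$ satisfy $$m(i,j)=30m(i-1,j-1)-108m(i-1,j-2)+81m(i-1,j-3)-12m(i-2,j-1)+9m(i-2,j-2)+m(i-3,j-1),$$ with $m(i,j)=0$ whenever $j\le0$. Define integer sequences $d_\alpha=(d_\alpha(j))_{j\ge1}$ for $\alpha\ge1$ by $d_1=(9,0,0,\dots)$ and, for $\alpha\ge2$, $d_\alpha(j)=\sum_{k\ge1}a(k,j)d_{\alpha-1}(k)$ if $\alpha$ is even and $d_\alpha(j)=\sum_{k\ge1}b(k,j)d_{\alpha-1}(k)$ if $\alpha$ is odd. Then for all $\alpha\ge1$ and $j\ge1$, $$\pi(d_{2\alpha-1}(j))\ge 2\alpha+\left\lfloor\frac{2j-2}{3}\right\rfloor.$$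
   Context: For an integer $n$, $\pi(n)$ denotes the $3$-adic order of $n$, with the convention $\pi(0)=\infty$. $\lfloor x\rfloor$ is the largest integer not exceeding $x$. All sums defining $d_\alpha(j)$ are finite. *)

theory Defs
  imports Main "HOL-Library.Extended_Nat" "HOL-Computational_Algebra.Primes"
begin

definition rowval :: "int list \<Rightarrow> nat \<Rightarrow> int" where
  "rowval xs j = (if 1 \<le> j \<and> j \<le> length xs then xs ! (j - 1) else 0)"

text \<open>Matrix with given first three rows and the recurrence for i >= 4.
  Indices are naturals; column 0 (and row 0) is 0, so m(i,j)=0 for j<=0 is
  realised by truncated subtraction landing on column 0.\<close>
fun recmat :: "int list \<Rightarrow> int list \<Rightarrow> int list \<Rightarrow> nat \<Rightarrow> nat \<Rightarrow> int" where
  "recmat r1 r2 r3 0 j = 0"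
| "recmat r1 r2 r3 (Suc 0) j = rowval r1 j"
| "recmat r1 r2 r3 (Suc (Suc 0)) j = rowval r2 j"
| "recmat r1 r2 r3 (Suc (Suc (Suc 0))) j = rowval r3 j"
| "recmat r1 r2 r3 (Suc (Suc (Suc (Suc n)))) j =
     (if j = 0 then 0 else
        30 * recmat r1 r2 r3 (Suc (Suc (Suc n))) (j - 1)
      - 108 * recmat r1 r2 r3 (Suc (Suc (Suc n))) (j - 2)
      + 81 * recmat r1 r2 r3 (Suc (Suc (Suc n))) (j - 3)
      - 12 * recmat r1 r2 r3 (Suc (Suc n)) (j - 1)
      + 9 * recmat r1 r2 r3 (Suc (Suc n)) (j - 2)
      + recmat r1 r2 r3 (Suc n) (j - 1))"

definition amat :: "nat \<Rightarrow> nat \<Rightarrow> int" where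
  "amat = recmat [10, -36, 27]
                 [-8, 306, -2160, 5508, -5832, 2187]
                 [1, -360, 10566, -99144, 423549, -944784, 1141614, -708588, 177147]"

definition bmat :: "nat \<Rightarrow> nat \<Rightarrow> int" where
  "bmat = recmat [-9, 252, -891, 729]
                 [1, -378, 8613, -54675, 138510, -150903, 59049]
                 [0, 147, -14553, 312255, -2617839, 10764414, -23914845, 29288304, -18600435, 4782969]"

text \<open>The sequences d_alpha (alpha >= 1, entries j >= 1). The (finite) sum over k >= 1
  is taken over the nonzero terms.\<close>
fun dseq :: "nat \<Rightarrow> nat \<Rightarrow> int" where
  "dseq 0 j = 0"
| "dseq (Suc 0) j = (if j = 1 then 9 else 0)"
| "dseq (Suc (Suc n)) j =
     (let M = (if even (Suc (Suc n)) then amat else bmat) in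
      \<Sum>k \<in> {k. 1 \<le> k \<and> M k j * dseq (Suc n) k \<noteq> 0}. M k j * dseq (Suc n) k)"

definition pi3 :: "int \<Rightarrow> enat" where
  "pi3 x = (if x = 0 then \<infinity> else enat (multiplicity (3::int) x))"

end

theory Submission
  imports Defs
begin

text \<open>
  Every entry \<open>m(i,k)\<close> of \<open>a\<close> and \<open>b\<close> is divisible by \<open>3^\<lfloor>(3k-i-1)/2\<rfloor>\<close>: this holds
  for the three initial rows by inspection, and the coefficients \<open>30, 108, 81, 12, 9, 1\<close> of
  the recurrence have 3-adic orders \<open>1, 3, 4, 1, 2, 0\<close>, which compensate the shifts of
  \<open>i\<close> and \<open>k\<close>. Multiplying by \<open>a\<close> and \<open>b\<close> alternately, one shows by induction on \<open>\<alpha>\<close>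
  that \<open>3^(2\<alpha> + \<lfloor>(2j-2)/3\<rfloor>)\<close> divides \<open>d\<^sub>2\<^sub>\<alpha>\<^sub>-\<^sub>1(j)\<close> and \<open>3^(2\<alpha> + \<lfloor>(3k-3)/2\<rfloor>)\<close>,
  times a further \<open>3\<close> when \<open>k = 2\<close>, divides \<open>d\<^sub>2\<^sub>\<alpha>(k)\<close>. From row \<open>4\<close> on the entry bound
  suffices for both steps; for the first three rows the sharper orders of the listed entries
  are needed.
\<close>

definition mat_bound :: "nat \<Rightarrow> nat \<Rightarrow> nat" where
  "mat_bound i k = (3 * k - (i + 1)) div 2"

definition even_bound :: "nat \<Rightarrow> nat" where
  "even_bound k = (3 * k - 3) div 2 + (if k = 2 then 1 else 0)"

definition odd_bound :: "nat \<Rightarrow> nat" where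
  "odd_bound j = (2 * j - 2) div 3"

lemma power_dvd_mult_if_le_add:
  fixes p :: "'a::comm_semiring_1"
  assumes "p ^ t dvd a" and "p ^ e dvd x" and "n \<le> t + e"
  shows "p ^ n dvd a * x"
proof -
  have "p ^ n dvd p ^ (t + e)" using assms(3) by (rule le_imp_power_dvd)
  also have "\<dots> dvd a * x" using assms(1,2) by (simp add: power_add mult_dvd_mono)
  finally show ?thesis .
qed

lemma power_dvd_sum_mult:
  fixes p :: "'a::comm_semiring_1"
  assumes "\<And>k. k \<in> K \<Longrightarrow> p ^ (c + f k) dvd x k"
      and "\<And>k. k \<in> K \<Longrightarrow> p ^ g dvd p ^ f k * M k"
  shows "p ^ (c + g) dvd (\<Sum>k\<in>K. M k * x k)"
proof (rule dvd_sum)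
  fix k assume k: "k \<in> K"
  obtain y where y: "x k = p ^ c * p ^ f k * y"
    using assms(1)[OF k] by (auto simp: power_add elim: dvdE)
  have "p ^ c * p ^ g dvd p ^ c * (p ^ f k * M k) * y"
    using assms(2)[OF k] by (simp add: mult_dvd_mono)
  then show "p ^ (c + g) dvd M k * x k"
    by (simp add: y power_add ac_simps)
qed

lemma pi3_ge_if_power_dvd:
  assumes "(3::int) ^ n dvd x"
  shows "enat n \<le> pi3 x"
proof (cases "x = 0")
  case False
  then have "n \<le> multiplicity 3 x"
    using assms by (intro multiplicity_geI) simp_all
  then show ?thesis using False by (simp add: pi3_def)
qed (simp add: pi3_def)

lemma rowval_power_dvd:
  fixes p c :: int
  assumes "\<forall>i < length xs. p ^ e (Suc i) dvd c * xs ! i"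
  shows "p ^ e k dvd c * rowval xs k"
  using assms[rule_format, of "k - 1"] by (auto simp: rowval_def)

lemma mat_bound_shift:
  assumes "m + 3 * s \<le> i + 2 * t"
  shows "mat_bound i k \<le> t + mat_bound m (k - s)"
  using assms unfolding mat_bound_def by arith

lemma recmat_power_dvd:
  assumes "\<And>k. (3::int) ^ mat_bound 1 k dvd rowval r1 k"
      and "\<And>k. (3::int) ^ mat_bound 2 k dvd rowval r2 k"
      and "\<And>k. (3::int) ^ mat_bound 3 k dvd rowval r3 k"
  shows "(3::int) ^ mat_bound i k dvd recmat r1 r2 r3 i k"
proof (induction i arbitrary: k rule: less_induct)
  case (less i)
  consider "i = 1" | "i = 2" | "i = 3" | "i = 0" | n where "i = Suc (Suc (Suc (Suc n)))"
    by (metis One_nat_def Suc_1 numeral_3_eq_3 not0_implies_Suc)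
  then show ?case
  proof cases
    case (5 n)
    let ?R = "recmat r1 r2 r3"
    have shifted: "(3::int) ^ mat_bound i k dvd a * ?R m (k - s)"
      if "m < i" and "3 ^ t dvd a" and "m + 3 * s \<le> i + 2 * t" for m s t a
      using that less.IH by (blast intro: power_dvd_mult_if_le_add mat_bound_shift)
    have "(3::int) ^ mat_bound i k dvd 30 * ?R (Suc (Suc (Suc n))) (k - 1)"
      by (rule shifted[where t = 1]) (simp_all add: 5)
    moreover have "(3::int) ^ mat_bound i k dvd 108 * ?R (Suc (Suc (Suc n))) (k - 2)"
      by (rule shifted[where t = 3]) (simp_all add: 5)
    moreover have "(3::int) ^ mat_bound i k dvd 81 * ?R (Suc (Suc (Suc n))) (k - 3)"
      by (rule shifted[where t = 4]) (simp_all add: 5)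
    moreover have "(3::int) ^ mat_bound i k dvd 12 * ?R (Suc (Suc n)) (k - 1)"
      by (rule shifted[where t = 1]) (simp_all add: 5)
    moreover have "(3::int) ^ mat_bound i k dvd 9 * ?R (Suc (Suc n)) (k - 2)"
      by (rule shifted[where t = 2]) (simp_all add: 5)
    moreover have "(3::int) ^ mat_bound i k dvd 1 * ?R (Suc n) (k - 1)"
      by (rule shifted[where t = 0]) (simp_all add: 5)
    ultimately show ?thesis
      by (simp add: 5 dvd_add dvd_diff)
  qed (use assms in \<open>auto simp: numeral_2_eq_2 numeral_3_eq_3\<close>)
qed

lemma amat_rows:
  "amat 1 k = rowval [10, -36, 27] k"
  "amat 2 k = rowval [-8, 306, -2160, 5508, -5832, 2187] k"
  "amat 3 k = rowval [1, -360, 10566, -99144, 423549, -944784, 1141614, -708588, 177147] k"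
  by (simp_all add: amat_def numeral_2_eq_2 numeral_3_eq_3)

lemma bmat_rows:
  "bmat 1 k = rowval [-9, 252, -891, 729] k"
  "bmat 2 k = rowval [1, -378, 8613, -54675, 138510, -150903, 59049] k"
  "bmat 3 k = rowval [0, 147, -14553, 312255, -2617839, 10764414, -23914845, 29288304,
                      -18600435, 4782969] k"
  by (simp_all add: bmat_def numeral_2_eq_2 numeral_3_eq_3)

lemma amat_power_dvd: "(3::int) ^ mat_bound i k dvd amat i k"
  unfolding amat_def
  by (rule recmat_power_dvd)
     (rule rowval_power_dvd[where c = 1, simplified], simp add: All_less_Suc2 mat_bound_def)+

lemma bmat_power_dvd: "(3::int) ^ mat_bound i k dvd bmat i k"
  unfolding bmat_def
  by (rule recmat_power_dvd)
     (rule rowval_power_dvd[where c = 1, simplified], simp add: All_less_Suc2 mat_bound_def)+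

lemma even_bound_le_mat_bound:
  assumes "4 \<le> l"
  shows "even_bound k \<le> odd_bound l + mat_bound l k"
  using assms unfolding even_bound_def odd_bound_def mat_bound_def
  by (cases "l = 4"; cases "k = 2") simp_all

lemma odd_bound_le_mat_bound:
  assumes "4 \<le> k" and "1 \<le> j"
  shows "2 + odd_bound j \<le> even_bound k + mat_bound k j"
  using assms unfolding even_bound_def odd_bound_def mat_bound_def by simp

lemma amat_even_bound:
  assumes "1 \<le> l"
  shows "(3::int) ^ even_bound k dvd 3 ^ odd_bound l * amat l k"
proof -
  consider "l = 1" | "l = 2" | "l = 3" | "4 \<le> l" using assms by linarith
  then show ?thesis
  proof cases
    case 4
    then show ?thesis
      by (intro power_dvd_mult_if_le_add[OF dvd_refl amat_power_dvd] even_bound_le_mat_bound)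
  qed (simp only: amat_rows, rule rowval_power_dvd,
       simp add: All_less_Suc2 even_bound_def odd_bound_def)+
qed

lemma bmat_odd_bound:
  assumes "1 \<le> k" and "1 \<le> j"
  shows "(3::int) ^ (2 + odd_bound j) dvd 3 ^ even_bound k * bmat k j"
proof -
  consider "k = 1" | "k = 2" | "k = 3" | "4 \<le> k" using assms(1) by linarith
  then show ?thesis
  proof cases
    case 4
    then show ?thesis
      by (intro power_dvd_mult_if_le_add[OF dvd_refl bmat_power_dvd]
          odd_bound_le_mat_bound assms(2))
  qed (simp only: bmat_rows, rule rowval_power_dvd,
       simp add: All_less_Suc2 even_bound_def odd_bound_def)+
qed

lemma dseq_even_step:
  assumes "even n"
  shows "dseq (Suc (Suc n)) j =
    (\<Sum>k | 1 \<le> k \<and> amat k j * dseq (Suc n) k \<noteq> 0. amat k j * dseq (Suc n) k)"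
  using assms by simp

lemma dseq_odd_step:
  assumes "odd n"
  shows "dseq (Suc (Suc n)) j =
    (\<Sum>k | 1 \<le> k \<and> bmat k j * dseq (Suc n) k \<noteq> 0. bmat k j * dseq (Suc n) k)"
  using assms by simp

lemma dseq_odd_power_dvd:
  assumes "1 \<le> j"
  shows "(3::int) ^ (2 * m + 2 + odd_bound j) dvd dseq (Suc (2 * m)) j"
  using assms
proof (induction m arbitrary: j)
  case 0
  then show ?case by (cases "j = 1") (auto simp: odd_bound_def)
next
  case (Suc m)
  have parity: "even (2 * m)" "odd (Suc (2 * m))" by simp_all
  have even_dvd: "(3::int) ^ (2 * m + 2 + even_bound k) dvd dseq (Suc (Suc (2 * m))) k" for k
    unfolding dseq_even_step[OF parity(1)]
    by (rule power_dvd_sum_mult) (blast intro: Suc.IH amat_even_bound)+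
  have "(3::int) ^ ((2 * m + 2) + (2 + odd_bound j)) dvd dseq (Suc (Suc (Suc (2 * m)))) j"
    unfolding dseq_odd_step[OF parity(2)]
    by (rule power_dvd_sum_mult) (blast intro: even_dvd bmat_odd_bound Suc.prems)+
  then show ?case by (simp add: ac_simps)
qed

theorem theorem3p3:
  fixes \<alpha> j :: nat
  assumes "\<alpha> \<ge> 1" and "j \<ge> 1"
  shows "pi3 (dseq (2 * \<alpha> - 1) j) \<ge> enat (2 * \<alpha> + (2 * j - 2) div 3)"
proof -
  obtain m where m: "\<alpha> = Suc m" using assms(1) by (cases \<alpha>) auto
  have "(3::int) ^ (2 * m + 2 + odd_bound j) dvd dseq (Suc (2 * m)) j"
    using assms(2) by (rule dseq_odd_power_dvd)
  then show ?thesis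
    using pi3_ge_if_power_dvd by (simp add: m odd_bound_def)
qed

end
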